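(* A semiregular topological space $X$ is point-rotund if and only if $X$ is completely regular.
   Context: A topological space $X$ is semiregular if for every $x\in X$ and neighborhood $O_x$ of $x$ there is a neighborhood $U_x$ of $x$ with $\mathrm{int}\,\mathrm{cl}(U_x)\subset O_x$; completely regular if for every $x$ and neighborhood $O_x$ there is a continuous $f:X\to[0,1]$ with $f(x)=0$ and $f^{-1}([0,1))\subset O_x$ (no $T_1$ assumed in either). Entourages: subsets of $X\times X$ containing the diagonal; $U\circ V=\{(x,z):\exists y\,((x,y)\in U,(y,z)\in V)\}$; $B(x;U)=\{y:(x,y)\in U\}$. A quasi-uniformity is a family $\mathcal U$ of entourages closed under supersets, with any two members containing a common member and each $U\in\mathcal U$ containing $V\circ V$ for some $V\in\mathcal U$; it generates the topology in which $W$ is open iff each $x\in W$ has $B(x;U)\subset W$ for some $U\in\mathcal U$. A base $\mathcal B$ of $\mathcal U$ is multiplicative if closed under $\circ$, and point-rotund if $\overline{B(x;V)}\subset\mathrm{int}\,\overline{B(x;V\circ U)}$ for all $x$ and $U,V\in\mathcal B$ (closures/interiors in the generated topology). A topological space is point-rotund if its topology is generated by a quasi-uniformity having a point-rotund multiplicative base. *)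

theory Defs
  imports "HOL-Analysis.Analysis"
begin

definition semiregular_space :: "'a topology \<Rightarrow> bool" where
  "semiregular_space X \<longleftrightarrow>
     (\<forall>x N. openin X N \<and> x \<in> N \<longrightarrow>
        (\<exists>U. openin X U \<and> x \<in> U \<and> X interior_of (X closure_of U) \<subseteq> N))"

definition entourage :: "'a set \<Rightarrow> ('a \<times> 'a) set \<Rightarrow> bool" where
  "entourage S U \<longleftrightarrow> Id_on S \<subseteq> U \<and> U \<subseteq> S \<times> S"

text \<open>Quasi-uniformity on S (the composition U \<circ> V of the paper is relcomp U O V).\<close>
definition quasi_uniformity :: "'a set \<Rightarrow> ('a \<times> 'a) set set \<Rightarrow> bool" where
  "quasi_uniformity S \<U> \<longleftrightarrow>
     \<U> \<noteq> {} \<and>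
     (\<forall>U\<in>\<U>. entourage S U) \<and>
     (\<forall>U V. U \<in> \<U> \<and> entourage S V \<and> U \<subseteq> V \<longrightarrow> V \<in> \<U>) \<and>
     (\<forall>U\<in>\<U>. \<forall>V\<in>\<U>. \<exists>W\<in>\<U>. W \<subseteq> U \<and> W \<subseteq> V) \<and>
     (\<forall>U\<in>\<U>. \<exists>V\<in>\<U>. V O V \<subseteq> U)"

text \<open>The quasi-uniformity \<U> generates the topology of X
  (B(x;U) is written U `` {x}).\<close>
definition generates_topology :: "('a \<times> 'a) set set \<Rightarrow> 'a topology \<Rightarrow> bool" where
  "generates_topology \<U> X \<longleftrightarrow>
     (\<forall>W. openin X W \<longleftrightarrow>
        (W \<subseteq> topspace X \<and> (\<forall>x\<in>W. \<exists>U\<in>\<U>. U `` {x} \<subseteq> W)))"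

definition qu_base :: "('a \<times> 'a) set set \<Rightarrow> ('a \<times> 'a) set set \<Rightarrow> bool" where
  "qu_base \<U> \<B> \<longleftrightarrow> \<B> \<subseteq> \<U> \<and> (\<forall>U\<in>\<U>. \<exists>V\<in>\<B>. V \<subseteq> U)"

definition multiplicative :: "('a \<times> 'a) set set \<Rightarrow> bool" where
  "multiplicative \<B> \<longleftrightarrow> (\<forall>U\<in>\<B>. \<forall>V\<in>\<B>. U O V \<in> \<B>)"

text \<open>Point-rotund base; closures/interiors are taken in the generated topology X.\<close>
definition point_rotund_base :: "'a topology \<Rightarrow> ('a \<times> 'a) set set \<Rightarrow> bool" where
  "point_rotund_base X \<B> \<longleftrightarrow>
     (\<forall>x\<in>topspace X. \<forall>U\<in>\<B>. \<forall>V\<in>\<B>.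
        X closure_of (V `` {x}) \<subseteq> X interior_of (X closure_of ((V O U) `` {x})))"

definition point_rotund_space :: "'a topology \<Rightarrow> bool" where
  "point_rotund_space X \<longleftrightarrow>
     (\<exists>\<U> \<B>. quasi_uniformity (topspace X) \<U> \<and> generates_topology \<U> X \<and>
        qu_base \<U> \<B> \<and> multiplicative \<B> \<and> point_rotund_base X \<B>)"

end

(* In a completely regular space the continuous real functions induce a uniformity; it is its own
   multiplicative base and, being symmetric, it is point-rotund.
   Conversely, fix a point x of a point-rotund space, put H(A) = int cl A[x], and write A < C when
   A O D \<subseteq> C for some D in the multiplicative base.  Point-rotundity gives cl H(A) \<subseteq> H(C)
   whenever A < C, and halving of entourages makes < dense, so a family H(A_r) indexed by the dyadic
   rationals of [0,1] yields a Urysohn function exactly as in the proof of Urysohn's lemma.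
   Semiregularity lets the top member H(A_1) be chosen inside any given neighbourhood of x. *)

theory Submission
  imports Defs
begin

lemma dyadics_dense:
  fixes a b :: real
  assumes "0 \<le> a" "a < b"
  obtains r where "r \<in> dyadics" "a < r" "r < b"
proof -
  have "closure ({a<..<b} \<inter> (\<Union>k m. {of_nat m / 2^k})) = closure {a<..<b}"
    using assms by (intro closure_dyadic_rationals_in_convex_set_pos_1) auto
  then have "{a<..<b} \<inter> dyadics \<noteq> {}"
    using assms by (auto simp: dyadics_def)
  then show thesis
    using that by auto
qed

lemma continuous_map_from_dyadic_scale:
  fixes G :: "real \<Rightarrow> 'a set"
  assumes opn: "\<And>r. r \<in> dyadics \<inter> {0..1} \<Longrightarrow> openin X (G r)"
    and scale: "\<And>r s. \<lbrakk>r \<in> dyadics \<inter> {0..1}; s \<in> dyadics \<inter> {0..1}; r < s\<rbrakk>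
                  \<Longrightarrow> X closure_of G r \<subseteq> G s"
  obtains f where "continuous_map X euclideanreal f"
    "f ` G 0 \<subseteq> {0}" "f ` (topspace X - G 1) \<subseteq> {1}"
proof
  define D where "D = dyadics \<inter> {0..1::real}"
  \<comment> \<open>the inserted 1 gives f y = 1, instead of the junk value Inf {}, when y lies in no G r\<close>
  define f where "f y = Inf (insert 1 {r \<in> D. y \<in> G r})" for y
  have bdd: "bdd_below (insert 1 {r \<in> D. y \<in> G r})" for y
    by (rule bdd_belowI[of _ 0]) (auto simp: D_def)
  have "0 \<in> D" "1 \<in> D"
    by (force simp: D_def dyadics_def)+
  have G_sub: "G r \<subseteq> topspace X" if "r \<in> D" for r
    using openin_subset[OF opn] that by (simp add: D_def)
  have f_le: "f y \<le> r" if "r \<in> D" "y \<in> G r" for r y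
    unfolding f_def using bdd that by (auto intro: cInf_lower)
  have f_le1: "f y \<le> 1" for y
    unfolding f_def using bdd by (auto intro: cInf_lower)
  have f_nonneg: "0 \<le> f y" for y
    unfolding f_def by (intro cInf_greatest) (auto simp: D_def)
  have f_ge: "r \<le> f y" if "r \<in> D" "y \<notin> G r" for r y
    unfolding f_def
  proof (rule cInf_greatest)
    fix s assume s: "s \<in> insert 1 {r \<in> D. y \<in> G r}"
    show "r \<le> s"
    proof (rule ccontr)
      assume "\<not> r \<le> s"
      with s \<open>r \<in> D\<close> have "s \<in> D" "s < r" "y \<in> G s"
        by (auto simp: D_def)
      then have "y \<in> X closure_of G s"
        using closure_of_subset[OF G_sub] by blast
      with \<open>y \<notin> G r\<close> show False
        using scale[of s r] \<open>s \<in> D\<close> \<open>r \<in> D\<close> \<open>s < r\<close> unfolding D_def by blast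
    qed
  qed auto
  have "openin X {y \<in> topspace X. f y < t}" for t
  proof (cases "t \<le> 1")
    case True
    have "f y < t \<longleftrightarrow> (\<exists>r \<in> D. r < t \<and> y \<in> G r)" for y
      using True by (auto simp: f_def cInf_less_iff[OF _ bdd] intro: le_less_trans[OF f_le])
    then have "{y \<in> topspace X. f y < t} = (\<Union>r \<in> {r \<in> D. r < t}. G r)"
      using G_sub by auto
    then show ?thesis
      using opn by (auto simp: D_def)
  next
    case False
    then have "{y \<in> topspace X. f y < t} = topspace X"
      using f_le1 by (auto simp: not_le intro: le_less_trans)
    then show ?thesis
      by simp
  qed
  moreover have "openin X {y \<in> topspace X. t < f y}" for t
  proof (cases "0 \<le> t")
    case True
    have "t < f y \<longleftrightarrow> (\<exists>r \<in> D. t < r \<and> y \<notin> X closure_of G r)" for y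
    proof
      assume "t < f y"
      then obtain r s where "r \<in> dyadics" "s \<in> dyadics" "t < r" "r < s" "s < f y"
        using True by (meson dyadics_dense order.trans less_imp_le)
      moreover have "f y \<le> 1"
        by (rule f_le1)
      ultimately have "r \<in> D" "s \<in> D" "y \<notin> G s"
        using True f_le by (force simp: D_def)+
      with \<open>t < r\<close> \<open>r < s\<close> show "\<exists>r \<in> D. t < r \<and> y \<notin> X closure_of G r"
        using scale unfolding D_def by blast
    next
      assume "\<exists>r \<in> D. t < r \<and> y \<notin> X closure_of G r"
      then show "t < f y"
        using closure_of_subset[OF G_sub] f_ge by (meson less_le_trans subsetD)
    qed
    then have "{y \<in> topspace X. t < f y} = (\<Union>r \<in> {r \<in> D. t < r}. topspace X - X closure_of G r)"
      by auto
    then show ?thesis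
      by (simp only:) (intro openin_Union, auto)
  next
    case False
    then have "{y \<in> topspace X. t < f y} = topspace X"
      using f_nonneg by (auto simp: not_le intro: less_le_trans)
    then show ?thesis
      by simp
  qed
  ultimately show "continuous_map X euclideanreal f"
    by (simp add: continuous_map_upper_lower_semicontinuous_lt)
  show "f ` G 0 \<subseteq> {0}"
    using f_le f_nonneg \<open>0 \<in> D\<close> by (force intro: order.antisym)
  show "f ` (topspace X - G 1) \<subseteq> {1}"
    using f_ge f_le1 \<open>1 \<in> D\<close> by (force intro: order.antisym)
qed

lemma relcomp_entourage_superset:
  assumes "entourage S U" "entourage S V"
  shows "V \<subseteq> V O U"
proof
  fix p assume "p \<in> V"
  moreover obtain a b where "p = (a, b)"
    by fastforce
  ultimately show "p \<in> V O U"
    using assms unfolding entourage_def by blast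
qed

lemma relcomp_entourage:
  assumes "entourage S U" "entourage S V"
  shows "entourage S (U O V)"
  unfolding entourage_def
proof
  show "Id_on S \<subseteq> U O V"
    using relcomp_entourage_superset[OF assms(2,1)] assms(1) unfolding entourage_def by blast
  show "U O V \<subseteq> S \<times> S"
    using assms unfolding entourage_def by (intro relcomp_subset_Sigma) auto
qed

lemma quasi_uniformity_entourage:
  "quasi_uniformity S \<U> \<Longrightarrow> U \<in> \<U> \<Longrightarrow> entourage S U"
  unfolding quasi_uniformity_def by (elim conjE) (erule bspec)

lemma quasi_uniformity_superset:
  "quasi_uniformity S \<U> \<Longrightarrow> U \<in> \<U> \<Longrightarrow> U \<subseteq> V \<Longrightarrow> entourage S V \<Longrightarrow> V \<in> \<U>"
  unfolding quasi_uniformity_def by (elim conjE allE impE) auto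

lemma quasi_uniformity_half:
  "quasi_uniformity S \<U> \<Longrightarrow> U \<in> \<U> \<Longrightarrow> \<exists>V\<in>\<U>. V O V \<subseteq> U"
  unfolding quasi_uniformity_def by (elim conjE) (erule bspec)

lemma quasi_uniformity_imp_multiplicative:
  assumes "quasi_uniformity S \<U>"
  shows "multiplicative \<U>"
  unfolding multiplicative_def
proof (intro ballI)
  fix U V assume "U \<in> \<U>" "V \<in> \<U>"
  then have U: "entourage S U" and V: "entourage S V"
    using quasi_uniformity_entourage[OF assms] by blast+
  show "U O V \<in> \<U>"
    using quasi_uniformity_superset[OF assms \<open>U \<in> \<U>\<close>]
      relcomp_entourage_superset[OF V U] relcomp_entourage[OF U V] by blast
qed

lemma quasi_uniformity_base_half:
  assumes "quasi_uniformity S \<U>" "qu_base \<U> \<B>" "U \<in> \<U>"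
  obtains W where "W \<in> \<B>" "W O W \<subseteq> U"
proof -
  obtain V where "V \<in> \<U>" "V O V \<subseteq> U"
    using quasi_uniformity_half[OF assms(1,3)] by blast
  moreover obtain W where "W \<in> \<B>" "W \<subseteq> V"
    using assms(2) \<open>V \<in> \<U>\<close> unfolding qu_base_def by blast
  ultimately show thesis
    using that relcomp_mono[of W V W V] by blast
qed

lemma quasi_uniformity_base_cube:
  assumes qu: "quasi_uniformity S \<U>" and base: "qu_base \<U> \<B>" and "U \<in> \<U>"
  obtains W where "W \<in> \<B>" "W O W O W \<subseteq> U"
proof -
  have B_U: "\<B> \<subseteq> \<U>"
    using base unfolding qu_base_def by blast
  obtain W1 where W1: "W1 \<in> \<B>" "W1 O W1 \<subseteq> U"
    using quasi_uniformity_base_half[OF qu base \<open>U \<in> \<U>\<close>] .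
  then obtain W where W: "W \<in> \<B>" "W O W \<subseteq> W1"
    using quasi_uniformity_base_half[OF qu base] B_U by blast
  then have W_ent: "entourage S W"
    using quasi_uniformity_entourage[OF qu] B_U by blast
  then have "W \<subseteq> W O W"
    by (rule relcomp_entourage_superset[OF W_ent])
  with W have "W O W O W \<subseteq> W1 O W1"
    by (metis O_assoc relcomp_mono order.trans)
  with W W1 show thesis
    using that by blast
qed

lemma point_rotund_base_closure_interior:
  assumes "point_rotund_base X \<B>" "x \<in> topspace X" "A \<in> \<B>" "D \<in> \<B>" "A O D \<subseteq> C"
  shows "X closure_of (X interior_of (X closure_of (A `` {x})))
           \<subseteq> X interior_of (X closure_of (C `` {x}))"
proof -
  have "X closure_of (X interior_of (X closure_of (A `` {x}))) \<subseteq> X closure_of (A `` {x})"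
    by (metis closure_of_closure_of closure_of_mono interior_of_subset)
  also have "\<dots> \<subseteq> X interior_of (X closure_of ((A O D) `` {x}))"
    using assms unfolding point_rotund_base_def by blast
  also have "\<dots> \<subseteq> X interior_of (X closure_of (C `` {x}))"
    using assms by (intro interior_of_mono closure_of_mono Image_mono) auto
  finally show ?thesis .
qed

lemma point_rotund_base_dyadic_scale:
  assumes qu: "quasi_uniformity (topspace X) \<U>" and base: "qu_base \<U> \<B>"
    and mul: "multiplicative \<B>" and rot: "point_rotund_base X \<B>"
    and "x \<in> topspace X" "W \<in> \<B>"
  obtains G :: "real \<Rightarrow> 'a set" where
    "G 0 = X interior_of (X closure_of ((W O W) `` {x}))"
    "G 1 = X interior_of (X closure_of ((W O W O W) `` {x}))"
    "\<And>r. r \<in> dyadics \<inter> {0..1} \<Longrightarrow> openin X (G r)"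
    "\<And>r s. \<lbrakk>r \<in> dyadics \<inter> {0..1}; s \<in> dyadics \<inter> {0..1}; r < s\<rbrakk>
             \<Longrightarrow> X closure_of G r \<subseteq> G s"
proof -
  define R where "R A C \<longleftrightarrow> A \<in> \<B> \<and> C \<in> \<B> \<and> (\<exists>D\<in>\<B>. A O D \<subseteq> C)" for A C
  have B_relcomp: "A O D \<in> \<B>" if "A \<in> \<B>" "D \<in> \<B>" for A D
    using mul that unfolding multiplicative_def by blast
  have "\<exists>F :: real \<Rightarrow> ('a \<times> 'a) set. F 0 = W O W \<and> F 1 = W O W O W \<and>
          (\<forall>r \<in> dyadics \<inter> {0..1}. \<forall>s \<in> dyadics \<inter> {0..1}. r < s \<longrightarrow> R (F r) (F s))"
  proof (rule recursion_on_dyadic_fractions)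
    show "R (W O W) (W O W O W)"
      unfolding R_def using \<open>W \<in> \<B>\<close> B_relcomp by (metis O_assoc order.refl)
  next
    fix A C assume "R A C"
    then obtain D where "A \<in> \<B>" "C \<in> \<B>" "D \<in> \<B>" "A O D \<subseteq> C"
      unfolding R_def by blast
    moreover obtain E where "E \<in> \<B>" "E O E \<subseteq> D"
      using quasi_uniformity_base_half[OF qu base] base \<open>D \<in> \<B>\<close> unfolding qu_base_def by blast
    moreover have "(A O E) O E \<subseteq> A O D"
      unfolding O_assoc using \<open>E O E \<subseteq> D\<close> by (rule relcomp_mono[OF order.refl])
    ultimately have "R A (A O E)" "R (A O E) C"
      unfolding R_def using B_relcomp by blast+
    then show "\<exists>B. R A B \<and> R B C"
      by blast
  next
    fix A C E assume "R A C" "R C E"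
    then obtain D D' where "A \<in> \<B>" "E \<in> \<B>" "D \<in> \<B>" "D' \<in> \<B>" "A O D \<subseteq> C" "C O D' \<subseteq> E"
      unfolding R_def by blast
    moreover have "A O (D O D') \<subseteq> C O D'"
      unfolding O_assoc[symmetric] using \<open>A O D \<subseteq> C\<close> by (rule relcomp_mono[OF _ order.refl])
    ultimately show "R A E"
      unfolding R_def using B_relcomp by blast
  qed
  then obtain F :: "real \<Rightarrow> ('a \<times> 'a) set" where F: "F 0 = W O W" "F 1 = W O W O W"
    and R: "\<And>r s. \<lbrakk>r \<in> dyadics \<inter> {0..1}; s \<in> dyadics \<inter> {0..1}; r < s\<rbrakk> \<Longrightarrow> R (F r) (F s)"
    by blast
  show thesis
  proof (rule that[of "\<lambda>r. X interior_of (X closure_of (F r `` {x}))"])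
    show "X closure_of (X interior_of (X closure_of (F r `` {x})))
            \<subseteq> X interior_of (X closure_of (F s `` {x}))"
      if "r \<in> dyadics \<inter> {0..1}" "s \<in> dyadics \<inter> {0..1}" "r < s" for r s
      using R[OF that] point_rotund_base_closure_interior[OF rot \<open>x \<in> topspace X\<close>]
      unfolding R_def by blast
  qed (simp_all add: F)
qed

lemma point_rotund_imp_completely_regular:
  assumes "semiregular_space X" "point_rotund_space X"
  shows "completely_regular_space X"
  unfolding completely_regular_space_alt'
proof (intro allI impI)
  fix N x assume "openin X N" "x \<in> N"
  obtain \<U> \<B> where qu: "quasi_uniformity (topspace X) \<U>" and gen: "generates_topology \<U> X"
    and base: "qu_base \<U> \<B>" and mul: "multiplicative \<B>" and rot: "point_rotund_base X \<B>"
    using assms unfolding point_rotund_space_def by blast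
  obtain U where U: "openin X U" "x \<in> U" "X interior_of (X closure_of U) \<subseteq> N"
    using assms \<open>openin X N\<close> \<open>x \<in> N\<close> unfolding semiregular_space_def by blast
  obtain V where "V \<in> \<U>" "V `` {x} \<subseteq> U"
    using gen U unfolding generates_topology_def by blast
  then obtain W where W: "W \<in> \<B>" "W O W O W \<subseteq> V"
    using quasi_uniformity_base_cube[OF qu base] by blast
  have x: "x \<in> topspace X"
    using U openin_subset by blast
  obtain G :: "real \<Rightarrow> 'a set" where G0: "G 0 = X interior_of (X closure_of ((W O W) `` {x}))"
    and G1: "G 1 = X interior_of (X closure_of ((W O W O W) `` {x}))"
    and G_open: "\<And>r. r \<in> dyadics \<inter> {0..1} \<Longrightarrow> openin X (G r)"
    and G_scale: "\<And>r s. \<lbrakk>r \<in> dyadics \<inter> {0..1}; s \<in> dyadics \<inter> {0..1}; r < s\<rbrakk>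
             \<Longrightarrow> X closure_of G r \<subseteq> G s"
    using point_rotund_base_dyadic_scale[OF qu base mul rot x W(1)] by metis
  obtain f where f: "continuous_map X euclideanreal f"
    "f ` G 0 \<subseteq> {0}" "f ` (topspace X - G 1) \<subseteq> {1}"
    using continuous_map_from_dyadic_scale[of X G] G_open G_scale by blast
  have "entourage (topspace X) W"
    using quasi_uniformity_entourage[OF qu] base W unfolding qu_base_def by blast
  then have "x \<in> X closure_of (W `` {x})"
    using x closure_of_subset[of "W `` {x}" X] unfolding entourage_def by blast
  then have "x \<in> G 0"
    using rot x W unfolding G0 point_rotund_base_def by blast
  have "(W O W O W) `` {x} \<subseteq> U"
    using W(2) \<open>V `` {x} \<subseteq> U\<close> by blast
  then have "G 1 \<subseteq> N"
    unfolding G1 using U(3) by (meson closure_of_mono interior_of_mono order.trans)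
  with \<open>x \<in> G 0\<close> f show "\<exists>f. continuous_map X euclideanreal f \<and> f x = 0 \<and> f ` (topspace X - N) \<subseteq> {1}"
    by blast
qed

definition fun_entourage :: "'a topology \<Rightarrow> ('a \<Rightarrow> real) set \<Rightarrow> real \<Rightarrow> ('a \<times> 'a) set" where
  "fun_entourage X F e =
     {(x, y). x \<in> topspace X \<and> y \<in> topspace X \<and> (\<forall>f\<in>F. \<bar>f x - f y\<bar> < e)}"

definition fun_quasi_uniformity :: "'a topology \<Rightarrow> ('a \<times> 'a) set set" where
  "fun_quasi_uniformity X =
     {U. entourage (topspace X) U \<and>
         (\<exists>F e. finite F \<and> (\<forall>f\<in>F. continuous_map X euclideanreal f) \<and> 0 < e \<and>
                fun_entourage X F e \<subseteq> U)}"

lemma entourage_fun_entourage: "0 < e \<Longrightarrow> entourage (topspace X) (fun_entourage X F e)"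
  by (auto simp: entourage_def fun_entourage_def)

lemma fun_entourage_sym: "(x, y) \<in> fun_entourage X F e \<longleftrightarrow> (y, x) \<in> fun_entourage X F e"
  by (auto simp: fun_entourage_def abs_minus_commute)

lemma fun_entourage_relcomp:
  "fun_entourage X F d O fun_entourage X F e \<subseteq> fun_entourage X F (d + e)"
  by (force simp: fun_entourage_def intro: abs_triangle_ineq[THEN order.strict_trans1] abs_diff_triangle_ineq)

lemma fun_entourage_Un_min:
  "fun_entourage X (F \<union> G) (min d e) \<subseteq> fun_entourage X F d \<inter> fun_entourage X G e"
  by (auto simp: fun_entourage_def)

lemma openin_fun_entourage_Image:
  assumes "finite F" "\<And>f. f \<in> F \<Longrightarrow> continuous_map X euclideanreal f"
  shows "openin X (fun_entourage X F e `` {x})"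
  using assms
proof (induction F rule: finite_induct)
  case empty
  have "fun_entourage X {} e `` {x} = (if x \<in> topspace X then topspace X else {})"
    by (auto simp: fun_entourage_def)
  then show ?case
    by simp
next
  case (insert g F)
  have "fun_entourage X (insert g F) e `` {x} =
          fun_entourage X F e `` {x} \<inter> {y \<in> topspace X. g y \<in> ball (g x) e}"
    by (auto simp: fun_entourage_def dist_real_def)
  moreover have "openin X {y \<in> topspace X. g y \<in> ball (g x) e}"
    using insert.prems by (intro openin_continuous_map_preimage[of X euclideanreal]) auto
  ultimately show ?case
    using insert by auto
qed

lemma fun_entourage_in_fun_quasi_uniformity:
  assumes "0 < e" "finite F" "\<And>f. f \<in> F \<Longrightarrow> continuous_map X euclideanreal f"
  shows "fun_entourage X F e \<in> fun_quasi_uniformity X"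
  using assms entourage_fun_entourage unfolding fun_quasi_uniformity_def by blast

lemma quasi_uniformity_fun_quasi_uniformity:
  "quasi_uniformity (topspace X) (fun_quasi_uniformity X)"
  unfolding quasi_uniformity_def
proof (intro conjI ballI allI impI)
  show "fun_quasi_uniformity X \<noteq> {}"
    using fun_entourage_in_fun_quasi_uniformity[of 1 "{}"] by auto
next
  fix U V assume "U \<in> fun_quasi_uniformity X \<and> entourage (topspace X) V \<and> U \<subseteq> V"
  then show "V \<in> fun_quasi_uniformity X"
    unfolding fun_quasi_uniformity_def by blast
next
  fix U V assume "U \<in> fun_quasi_uniformity X" "V \<in> fun_quasi_uniformity X"
  then obtain F d G e where "finite F" "\<forall>f\<in>F. continuous_map X euclideanreal f" "0 < d"
      "fun_entourage X F d \<subseteq> U" "finite G" "\<forall>f\<in>G. continuous_map X euclideanreal f" "0 < e"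
      "fun_entourage X G e \<subseteq> V"
    unfolding fun_quasi_uniformity_def by blast
  then show "\<exists>W\<in>fun_quasi_uniformity X. W \<subseteq> U \<and> W \<subseteq> V"
    using fun_entourage_Un_min[of X F G d e]
    by (intro bexI[OF _ fun_entourage_in_fun_quasi_uniformity[of "min d e" "F \<union> G"]]) auto
next
  fix U assume "U \<in> fun_quasi_uniformity X"
  then obtain F e where "finite F" "\<forall>f\<in>F. continuous_map X euclideanreal f" "0 < e"
      "fun_entourage X F e \<subseteq> U"
    unfolding fun_quasi_uniformity_def by blast
  then show "\<exists>V\<in>fun_quasi_uniformity X. V O V \<subseteq> U"
    using fun_entourage_relcomp[of X F "e/2" "e/2"]
    by (intro bexI[OF _ fun_entourage_in_fun_quasi_uniformity[of "e/2" F]]) auto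
qed (simp add: fun_quasi_uniformity_def)

lemma generates_topology_fun_quasi_uniformity:
  assumes "completely_regular_space X"
  shows "generates_topology (fun_quasi_uniformity X) X"
  unfolding generates_topology_def
proof (intro allI iffI conjI ballI)
  fix W x assume "openin X W" "x \<in> W"
  then obtain f where f: "continuous_map X euclideanreal f" "f x = 0"
      "f ` (topspace X - W) \<subseteq> {1}"
    using assms unfolding completely_regular_space_alt' by meson
  then have "fun_entourage X {f} 1 `` {x} \<subseteq> W"
    by (force simp: fun_entourage_def)
  moreover have "fun_entourage X {f} 1 \<in> fun_quasi_uniformity X"
    using f by (intro fun_entourage_in_fun_quasi_uniformity) auto
  ultimately show "\<exists>U\<in>fun_quasi_uniformity X. U `` {x} \<subseteq> W"
    by blast
next
  fix W assume W: "W \<subseteq> topspace X \<and> (\<forall>x\<in>W. \<exists>U\<in>fun_quasi_uniformity X. U `` {x} \<subseteq> W)"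
  show "openin X W"
    unfolding openin_subopen[of X W]
  proof
    fix x assume "x \<in> W"
    then obtain U where "U \<in> fun_quasi_uniformity X" "U `` {x} \<subseteq> W"
      using W by blast
    then obtain F e where F: "finite F" "\<forall>f\<in>F. continuous_map X euclideanreal f" "0 < e"
        "fun_entourage X F e \<subseteq> U"
      unfolding fun_quasi_uniformity_def by blast
    have "openin X (fun_entourage X F e `` {x})"
      using F by (intro openin_fun_entourage_Image) auto
    moreover have "x \<in> fun_entourage X F e `` {x}"
      using W \<open>x \<in> W\<close> \<open>0 < e\<close> by (auto simp: fun_entourage_def)
    moreover have "fun_entourage X F e `` {x} \<subseteq> W"
      using F(4) \<open>U `` {x} \<subseteq> W\<close> by blast
    ultimately show "\<exists>T. openin X T \<and> x \<in> T \<and> T \<subseteq> W"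
      by blast
  qed
next
  fix W assume "openin X W"
  then show "W \<subseteq> topspace X"
    by (rule openin_subset)
qed

lemma point_rotund_base_fun_quasi_uniformity:
  "point_rotund_base X (fun_quasi_uniformity X)"
  unfolding point_rotund_base_def
proof (intro ballI)
  fix x U V assume "x \<in> topspace X" "U \<in> fun_quasi_uniformity X" "V \<in> fun_quasi_uniformity X"
  then obtain F e where F: "finite F" "\<forall>f\<in>F. continuous_map X euclideanreal f" "0 < e"
      "fun_entourage X F e \<subseteq> U"
    unfolding fun_quasi_uniformity_def by blast
  have "X closure_of (V `` {x}) \<subseteq> X interior_of ((V O U) `` {x})"
  proof
    fix y assume y: "y \<in> X closure_of (V `` {x})"
    define T where "T = fun_entourage X F (e/2) `` {y}"
    have "openin X T"
      unfolding T_def using F by (intro openin_fun_entourage_Image) auto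
    moreover have "y \<in> T"
      using subsetD[OF closure_of_subset_topspace y] F(3) by (simp add: T_def fun_entourage_def)
    ultimately obtain z where "z \<in> V `` {x}" "z \<in> T"
      using y unfolding in_closure_of by blast
    then have z: "(x, z) \<in> V" "(z, y) \<in> fun_entourage X F (e/2)"
      unfolding T_def by (auto intro: fun_entourage_sym[THEN iffD1])
    have "T \<subseteq> (V O U) `` {x}"
    proof
      fix w assume "w \<in> T"
      then have "(z, w) \<in> fun_entourage X F (e/2) O fun_entourage X F (e/2)"
        using z(2) unfolding T_def by blast
      then have "(z, w) \<in> U"
        using fun_entourage_relcomp[of X F "e/2" "e/2"] F(4) by auto
      with z(1) show "w \<in> (V O U) `` {x}"
        by blast
    qed
    then show "y \<in> X interior_of ((V O U) `` {x})"
      using interior_of_maximal[OF _ \<open>openin X T\<close>] \<open>y \<in> T\<close> by blast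
  qed
  also have "\<dots> \<subseteq> X interior_of (X closure_of ((V O U) `` {x}))"
  proof (intro interior_of_mono closure_of_subset)
    have "entourage (topspace X) U" "entourage (topspace X) V"
      using \<open>U \<in> fun_quasi_uniformity X\<close> \<open>V \<in> fun_quasi_uniformity X\<close>
      by (simp_all add: fun_quasi_uniformity_def)
    then have "entourage (topspace X) (V O U)"
      by (intro relcomp_entourage)
    then show "(V O U) `` {x} \<subseteq> topspace X"
      unfolding entourage_def by blast
  qed
  finally show "X closure_of (V `` {x}) \<subseteq> X interior_of (X closure_of ((V O U) `` {x}))" .
qed

lemma completely_regular_imp_point_rotund:
  assumes "completely_regular_space X"
  shows "point_rotund_space X"
  unfolding point_rotund_space_def
proof (intro exI conjI)
  show "quasi_uniformity (topspace X) (fun_quasi_uniformity X)"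
    by (rule quasi_uniformity_fun_quasi_uniformity)
  show "generates_topology (fun_quasi_uniformity X) X"
    using assms by (rule generates_topology_fun_quasi_uniformity)
  show "qu_base (fun_quasi_uniformity X) (fun_quasi_uniformity X)"
    by (auto simp: qu_base_def)
  show "multiplicative (fun_quasi_uniformity X)"
    by (rule quasi_uniformity_imp_multiplicative[OF quasi_uniformity_fun_quasi_uniformity])
  show "point_rotund_base X (fun_quasi_uniformity X)"
    by (rule point_rotund_base_fun_quasi_uniformity)
qed

theorem corollary4p3:
  fixes X :: "'a topology"
  assumes "semiregular_space X"
  shows "point_rotund_space X \<longleftrightarrow> completely_regular_space X"
  using assms point_rotund_imp_completely_regular completely_regular_imp_point_rotund by blast

end
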